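(* Let $\alpha>2$ and consider the equation in the unknown $\Lambda>0$ \[ \int_0^\infty\frac{1-\Lambda x^{2/\alpha}}{1+x}\,e^{-2\Lambda x^{2/\alpha}}\,dx=0 . \] If $\alpha\le4$ this equation has no solution $\Lambda>0$, and if $\alpha>4$ it has exactly one solution $\Lambda>0$.
   Context: The solution for $\alpha>4$ is denoted $\Lambda''(\alpha)$ in the paper. *)

theory Defs
  imports "HOL-Analysis.Analysis"
begin

definition lam_integrand :: "real \<Rightarrow> real \<Rightarrow> real \<Rightarrow> real" where
  "lam_integrand \<alpha> \<Lambda> x =
     (1 - \<Lambda> * x powr (2 / \<alpha>)) / (1 + x) * exp (- 2 * \<Lambda> * x powr (2 / \<alpha>))"

end

theory Submission
  imports Defs "HOL-Real_Asymp.Real_Asymp"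
begin

(*
  With b = 2/alpha and c = Lambda^(alpha/2), the substitution y = c x turns the equation into
  K b c = 0, where K b c = int_0^oo phi(y) / (c + y) dy and phi(y) = (1 - y^b) exp(-2 y^b).
  Integrating by parts against the derivative of y exp(-2 y^b) / (c + y) gives
    K b c = int y exp(-2 y^b) / (c + y)^2 + (2b - 1) int y^b exp(-2 y^b) / (c + y),
  which is positive when b >= 1/2, i.e. alpha <= 4.
  For b < 1/2 the first integral grows like -ln c as c -> 0 and is O(1/c^2) as c -> oo, while
  the second is bounded and of exact order 1/c; so the continuous function K b changes sign.
  The zero is unique because (c + 1) K b c is strictly decreasing in c: phi(y) and 1 - y
  have the same sign, and (c + 1)/(c + y) decreases in c exactly where y < 1.
*)

lemma bdd_above_atLeast_if_tendsto:
  fixes f :: "real \<Rightarrow> real"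
  assumes cont: "continuous_on {a..} f" and lim: "(f \<longlongrightarrow> l) at_top"
  shows "\<exists>M. \<forall>y\<ge>a. f y \<le> M"
proof -
  obtain Y where Y: "\<And>y. y \<ge> Y \<Longrightarrow> f y < l + 1"
    using order_tendstoD(2)[OF lim, of "l + 1"] by (auto simp: eventually_at_top_linorder)
  have "continuous_on {a..max a Y} f"
    using cont by (rule continuous_on_subset) auto
  then obtain x where x: "\<forall>y\<in>{a..max a Y}. f y \<le> f x"
    using continuous_attains_sup[of "{a..max a Y}" f] by auto
  then have "f y \<le> max (f x) (l + 1)" if "y \<ge> a" for y
  proof (cases "y \<le> max a Y")
    case True
    then have "f y \<le> f x" using x that by simp
    then show ?thesis by simp
  next
    case False
    then show ?thesis using Y[of y] by (simp add: not_le)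
  qed
  then show ?thesis by blast
qed

lemma continuous_on_powr_atLeast_0: "b > 0 \<Longrightarrow> continuous_on {0..} (\<lambda>y::real. y powr b)"
  by (intro continuous_on_powr') (auto intro: continuous_intros)

lemma exp_neg_powr_decay:
  fixes b :: real
  assumes "b > 0"
  shows "\<exists>M>0. \<forall>y\<ge>0. (1 + y) * exp (-(y powr b)) \<le> M / (1 + y)^2"
proof -
  have "continuous_on {0..} (\<lambda>y::real. (1 + y)^3 * exp (-(y powr b)))"
    using assms by (intro continuous_intros continuous_on_powr_atLeast_0)
  moreover have "((\<lambda>y::real. (1 + y)^3 * exp (-(y powr b))) \<longlongrightarrow> 0) at_top"
    using assms by real_asymp
  ultimately obtain M where M: "\<And>y. y \<ge> 0 \<Longrightarrow> (1 + y)^3 * exp (-(y powr b)) \<le> M"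
    using bdd_above_atLeast_if_tendsto by blast
  have "(1 + y) * exp (-(y powr b)) \<le> max M 1 / (1 + y)^2" if "y \<ge> 0" for y
  proof -
    have "(1 + y) * exp (-(y powr b)) * (1 + y)^2 \<le> max M 1"
      using M[OF that] by (simp add: power2_eq_square power3_eq_cube mult_ac)
    then show ?thesis using that by (simp add: pos_le_divide_eq)
  qed
  then show ?thesis by (intro exI[of _ "max M 1"]) auto
qed

lemma has_integral_inverse_square_shifted: "((\<lambda>y::real. 1 / (1 + y)^2) has_integral 1) {0..}"
proof (rule has_integral_to_inf)
  show "(\<lambda>y::real. 1 / (1 + y)^2) integrable_on {0..B}" for B :: real
    by (intro integrable_continuous_interval continuous_intros) auto
  have "((\<lambda>y::real. 1 / (1 + y)^2) has_integral (- 1 / (1 + B) - (- 1 / (1 + 0)))) {0..B}"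
    if "B \<ge> 0" for B :: real
    using that
    by (intro fundamental_theorem_of_calculus)
       (auto intro!: derivative_eq_intros simp: power2_eq_square field_simps
             simp flip: has_real_derivative_iff_has_vector_derivative)
  then have "\<forall>\<^sub>F B in at_top. integral {0..B} (\<lambda>y::real. 1 / (1 + y)^2) = 1 - 1 / (1 + B)"
    by (intro eventually_at_top_linorderI[of 0]) (auto dest: integral_unique)
  moreover have "((\<lambda>B::real. 1 - 1 / (1 + B)) \<longlongrightarrow> 1) at_top" by real_asymp
  ultimately show "((\<lambda>B. integral {0..B} (\<lambda>y::real. 1 / (1 + y)^2)) \<longlongrightarrow> 1) at_top"
    by (simp add: filterlim_cong)
qed auto

lemma absolutely_integrable_on_atLeast_0_dominated:
  fixes f :: "real \<Rightarrow> real"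
  assumes "continuous_on {0..} f" and "\<And>y. y \<ge> 0 \<Longrightarrow> \<bar>f y\<bar> \<le> C / (1 + y)^2"
  shows "f absolutely_integrable_on {0..}"
proof (rule measurable_bounded_by_integrable_imp_absolutely_integrable)
  show "f \<in> borel_measurable (lebesgue_on {0..})"
    using assms(1) by (intro continuous_imp_measurable_on_sets_lebesgue) auto
  show "(\<lambda>y. C * (1 / (1 + y)^2)) integrable_on {0..}"
    using has_integral_mult_right[OF has_integral_inverse_square_shifted] by blast
  show "norm (f y) \<le> C * (1 / (1 + y)^2)" if "y \<in> {0..}" for y
    using assms(2) that by simp
qed auto

lemma tendsto_integral_atLeastAtMost:
  fixes f :: "real \<Rightarrow> real"
  assumes "f absolutely_integrable_on {a..}"
  shows "((\<lambda>B. integral {a..B} f) \<longlongrightarrow> integral {a..} f) at_top"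
proof -
  have f: "set_integrable lebesgue {a..} f"
    using assms by (simp add: absolutely_integrable_on_def)
  have "((\<lambda>B. set_lebesgue_integral lebesgue {a..B} f) \<longlongrightarrow> set_lebesgue_integral lebesgue {a..} f) at_top"
    by (intro tendsto_set_lebesgue_integral_at_top f) auto
  moreover have "set_lebesgue_integral lebesgue {a..B} f = integral {a..B} f" for B
    using set_lebesgue_integral_eq_integral(2)[OF set_integrable_subset[OF f]] by auto
  ultimately show ?thesis
    using set_lebesgue_integral_eq_integral(2)[OF f] by simp
qed

lemma integrable_on_atLeastAtMost_if_absolutely_integrable:
  fixes f :: "real \<Rightarrow> real"
  shows "f absolutely_integrable_on {a..} \<Longrightarrow> f integrable_on {a..B}"
  by (intro integrable_on_subinterval[of _ "{a..}"]) (auto simp: absolutely_integrable_on_def)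

lemma integral_atLeastAtMost_le_atLeast:
  fixes f :: "real \<Rightarrow> real"
  assumes "f absolutely_integrable_on {a..}" "\<And>y. y \<ge> a \<Longrightarrow> f y \<ge> 0"
  shows "integral {a..B} f \<le> integral {a..} f"
  using assms integrable_on_atLeastAtMost_if_absolutely_integrable[OF assms(1)]
  by (intro integral_subset_le) (auto simp: absolutely_integrable_on_def)

lemma integral_atLeast_pos:
  fixes f :: "real \<Rightarrow> real"
  assumes "continuous_on {a..} f" "f integrable_on {a..}" "\<And>y. y \<ge> a \<Longrightarrow> f y \<ge> 0"
    and "x \<ge> a" "f x > 0"
  shows "integral {a..} f > 0"
proof -
  have int: "f integrable_on {a..x + 1}"
    using assms(1,4) by (intro integrable_continuous_interval) (auto elim: continuous_on_subset)
  have "integral {a..x + 1} f \<noteq> 0"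
  proof
    assume "integral {a..x + 1} f = 0"
    then have "(f has_integral 0) (cbox a (x + 1))"
      using int by (metis cbox_interval has_integral_integral)
    then have "f x = 0"
      using assms by (intro has_integral_0_cbox_imp_0[of a "x + 1" f])
        (auto elim: continuous_on_subset)
    with assms(5) show False by simp
  qed
  moreover have "integral {a..x + 1} f \<ge> 0"
    using int assms(3) by (intro integral_nonneg) auto
  moreover have "integral {a..x + 1} f \<le> integral {a..} f"
    using int assms(2,3) by (intro integral_subset_le) auto
  ultimately show ?thesis by linarith
qed

definition phi :: "real \<Rightarrow> real \<Rightarrow> real" where
  "phi b y = (1 - y powr b) * exp (- 2 * y powr b)"

definition K_integrand :: "real \<Rightarrow> real \<Rightarrow> real \<Rightarrow> real" where
  "K_integrand b c y = phi b y / (c + y)"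

definition K :: "real \<Rightarrow> real \<Rightarrow> real" where
  "K b c = integral {0..} (K_integrand b c)"

lemma abs_phi_le:
  assumes "y \<ge> 0"
  shows "\<bar>phi b y\<bar> \<le> exp (-(y powr b))"
proof -
  define t where "t = y powr b"
  have "t \<ge> 0" by (simp add: t_def)
  then have "\<bar>1 - t\<bar> \<le> exp t"
    using exp_ge_add_one_self[of t] by linarith
  then have "\<bar>1 - t\<bar> * exp (-2 * t) \<le> exp t * exp (-2 * t)"
    by (intro mult_right_mono) auto
  also have "exp t * exp (-2 * t) = exp (-t)"
    by (simp flip: exp_add)
  finally show ?thesis unfolding phi_def t_def by (simp add: abs_mult)
qed

lemma phi_mult_one_minus_nonneg:
  assumes "b > 0" "y \<ge> 0"
  shows "phi b y * (1 - y) \<ge> 0"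
proof (cases "y \<le> 1")
  case True
  then have "y powr b \<le> 1" using assms powr_mono2[of b y 1] by simp
  with True show ?thesis unfolding phi_def by simp
next
  case False
  then have "y powr b \<ge> 1" using assms powr_mono2[of b 1 y] by simp
  with False have "(1 - y powr b) * (1 - y) \<ge> 0" by (intro mult_nonpos_nonpos) auto
  then have "(1 - y powr b) * (1 - y) * exp (- 2 * y powr b) \<ge> 0" by simp
  then show ?thesis unfolding phi_def by (simp only: mult_ac)
qed

lemma phi_two_neg: "b > 0 \<Longrightarrow> phi b 2 < 0"
  using powr_less_mono2[of b 1 2] by (simp add: phi_def mult_less_0_iff)

lemma continuous_on_K_integrand: "b > 0 \<Longrightarrow> c > 0 \<Longrightarrow> continuous_on {0..} (K_integrand b c)"
  unfolding K_integrand_def phi_def by (intro continuous_intros continuous_on_powr_atLeast_0) auto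

lemma exp_neg_powr_le_inverse_square:
  fixes b :: real
  assumes "b > 0"
  shows "\<exists>M>0. \<forall>y\<ge>0. exp (-(y powr b)) \<le> M / (1 + y)^2"
proof -
  obtain M where M: "M > 0" "\<forall>y\<ge>0. (1 + y) * exp (-(y powr b)) \<le> M / (1 + y)^2"
    using exp_neg_powr_decay[OF assms] by blast
  have "exp (-(y powr b)) \<le> (1 + y) * exp (-(y powr b))" if "y \<ge> 0" for y
    using that by simp
  with M show ?thesis by (meson order_trans)
qed

lemma K_integrand_dominated:
  assumes "b > 0"
  shows "\<exists>M>0. \<forall>c y. c > 0 \<longrightarrow> y \<ge> 0 \<longrightarrow> \<bar>K_integrand b c y\<bar> \<le> (M / c) / (1 + y)^2"
proof -
  obtain M where M: "M > 0" "\<forall>y\<ge>0. exp (-(y powr b)) \<le> M / (1 + y)^2"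
    using exp_neg_powr_le_inverse_square[OF assms] by blast
  have "\<bar>K_integrand b c y\<bar> \<le> (M / c) / (1 + y)^2" if "c > 0" "y \<ge> 0" for c y
  proof -
    have "\<bar>K_integrand b c y\<bar> \<le> exp (-(y powr b)) / c"
      unfolding K_integrand_def using that abs_phi_le[of y b] by (simp add: abs_divide frac_le)
    also have "\<dots> \<le> (M / (1 + y)^2) / c"
      using M that by (intro divide_right_mono) auto
    finally show ?thesis by (simp add: mult.commute)
  qed
  with M show ?thesis by blast
qed

lemma K_integrand_absolutely_integrable:
  "b > 0 \<Longrightarrow> c > 0 \<Longrightarrow> K_integrand b c absolutely_integrable_on {0..}"
  using K_integrand_dominated[of b]
  by (metis absolutely_integrable_on_atLeast_0_dominated continuous_on_K_integrand)

lemma has_integral_K_integrand: "b > 0 \<Longrightarrow> c > 0 \<Longrightarrow> (K_integrand b c has_integral K b c) {0..}"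
  unfolding K_def using K_integrand_absolutely_integrable
  by (simp add: absolutely_integrable_on_def integrable_integral)

definition ibp_boundary :: "real \<Rightarrow> real \<Rightarrow> real \<Rightarrow> real" where
  "ibp_boundary b c y = y * exp (-2 * y powr b) / (c + y)"

definition ibp_term1 :: "real \<Rightarrow> real \<Rightarrow> real \<Rightarrow> real" where
  "ibp_term1 b c y = y * exp (-2 * y powr b) / (c + y)^2"

definition ibp_term2 :: "real \<Rightarrow> real \<Rightarrow> real \<Rightarrow> real" where
  "ibp_term2 b c y = y powr b * exp (-2 * y powr b) / (c + y)"

lemma has_real_derivative_ibp_boundary:
  assumes "c > 0" "y > 0"
  shows "(ibp_boundary b c has_real_derivative
            K_integrand b c y - ibp_term1 b c y - (2 * b - 1) * ibp_term2 b c y) (at y)"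
proof -
  have "y powr (b - 1) = y powr b / y" using assms by (simp add: powr_diff)
  then show ?thesis
    using assms unfolding ibp_boundary_def K_integrand_def phi_def ibp_term1_def ibp_term2_def
    by (auto intro!: derivative_eq_intros)
      (simp add: divide_simps power2_eq_square, simp add: algebra_simps)
qed

lemma ibp_term1_nonneg: "c > 0 \<Longrightarrow> y \<ge> 0 \<Longrightarrow> ibp_term1 b c y \<ge> 0"
  by (simp add: ibp_term1_def)

lemma ibp_term2_nonneg: "c > 0 \<Longrightarrow> y \<ge> 0 \<Longrightarrow> ibp_term2 b c y \<ge> 0"
  by (simp add: ibp_term2_def)

lemma continuous_on_ibp_boundary: "b > 0 \<Longrightarrow> c > 0 \<Longrightarrow> continuous_on {0..} (ibp_boundary b c)"
  unfolding ibp_boundary_def by (intro continuous_intros continuous_on_powr_atLeast_0) auto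

lemma continuous_on_ibp_term1: "b > 0 \<Longrightarrow> c > 0 \<Longrightarrow> continuous_on {0..} (ibp_term1 b c)"
  unfolding ibp_term1_def by (intro continuous_intros continuous_on_powr_atLeast_0) auto

lemma continuous_on_ibp_term2: "b > 0 \<Longrightarrow> c > 0 \<Longrightarrow> continuous_on {0..} (ibp_term2 b c)"
  unfolding ibp_term2_def by (intro continuous_intros continuous_on_powr_atLeast_0) auto

lemma ibp_term1_dominated:
  assumes "b > 0"
  shows "\<exists>M>0. \<forall>c y. c > 0 \<longrightarrow> y \<ge> 0 \<longrightarrow> ibp_term1 b c y \<le> (M / c^2) / (1 + y)^2"
proof -
  obtain M where M: "M > 0" "\<forall>y\<ge>0. (1 + y) * exp (-(y powr b)) \<le> M / (1 + y)^2"
    using exp_neg_powr_decay[OF assms] by blast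
  have "ibp_term1 b c y \<le> (M / c^2) / (1 + y)^2" if "c > 0" "y \<ge> 0" for c y
  proof -
    have "y * exp (-2 * y powr b) \<le> (1 + y) * exp (-(y powr b))"
      using that by (intro mult_mono) auto
    also have "\<dots> \<le> M / (1 + y)^2"
      using M that by auto
    finally have "ibp_term1 b c y \<le> (M / (1 + y)^2) / (c + y)^2"
      unfolding ibp_term1_def using that by (intro divide_right_mono) auto
    also have "\<dots> \<le> (M / (1 + y)^2) / c^2"
      using that M by (intro divide_left_mono power_mono mult_pos_pos) auto
    finally show ?thesis by (simp add: mult.commute)
  qed
  with M show ?thesis by blast
qed

lemma ibp_term1_absolutely_integrable:
  assumes "b > 0" "c > 0"
  shows "ibp_term1 b c absolutely_integrable_on {0..}"
proof -
  obtain M where "\<forall>c y. c > 0 \<longrightarrow> y \<ge> 0 \<longrightarrow> ibp_term1 b c y \<le> (M / c^2) / (1 + y)^2"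
    using ibp_term1_dominated[OF assms(1)] by blast
  then have "\<bar>ibp_term1 b c y\<bar> \<le> (M / c^2) / (1 + y)^2" if "y \<ge> 0" for y
    using assms that ibp_term1_nonneg by simp
  with assms show ?thesis
    by (intro absolutely_integrable_on_atLeast_0_dominated continuous_on_ibp_term1)
qed

lemma ibp_term2_absolutely_integrable:
  assumes "b > 0" "c > 0"
  shows "ibp_term2 b c absolutely_integrable_on {0..}"
proof -
  obtain M where M: "\<forall>y\<ge>0. exp (-(y powr b)) \<le> M / (1 + y)^2"
    using exp_neg_powr_le_inverse_square[OF assms(1)] by blast
  have "\<bar>ibp_term2 b c y\<bar> \<le> (M / c) / (1 + y)^2" if "y \<ge> 0" for y
  proof -
    define t where "t = y powr b"
    have "t \<le> exp t"
      using exp_ge_add_one_self[of t] by linarith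
    then have "t * exp (-2 * t) \<le> exp t * exp (-2 * t)"
      by (intro mult_right_mono) auto
    then have "t * exp (-2 * t) \<le> exp (-t)"
      by (simp flip: exp_add)
    then have "ibp_term2 b c y \<le> exp (-(y powr b)) / c"
      unfolding ibp_term2_def t_def using assms that by (intro frac_le) auto
    also have "\<dots> \<le> (M / (1 + y)^2) / c"
      using M assms that by (intro divide_right_mono) auto
    finally show ?thesis
      using ibp_term2_nonneg[OF assms(2) that] by (simp add: mult.commute)
  qed
  with assms show ?thesis
    by (intro absolutely_integrable_on_atLeast_0_dominated continuous_on_ibp_term2)
qed

lemma K_eq_ibp:
  assumes "b > 0" "c > 0"
  shows "K b c = integral {0..} (ibp_term1 b c) + (2 * b - 1) * integral {0..} (ibp_term2 b c)"
proof -
  note integrable = K_integrand_absolutely_integrable ibp_term1_absolutely_integrable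
    ibp_term2_absolutely_integrable
  have partial: "integral {0..B} (K_integrand b c) = ibp_boundary b c B + integral {0..B} (ibp_term1 b c)
      + (2 * b - 1) * integral {0..B} (ibp_term2 b c)" if "B \<ge> 0" for B
  proof -
    have "((\<lambda>y. K_integrand b c y - ibp_term1 b c y - (2 * b - 1) * ibp_term2 b c y)
            has_integral ibp_boundary b c B - ibp_boundary b c 0) {0..B}"
    proof (rule fundamental_theorem_of_calculus_interior_strong[where S = "{}"])
      show "continuous_on {0..B} (ibp_boundary b c)"
        using continuous_on_ibp_boundary[OF assms] by (rule continuous_on_subset) auto
      show "(ibp_boundary b c has_vector_derivative
          K_integrand b c y - ibp_term1 b c y - (2 * b - 1) * ibp_term2 b c y) (at y)"
        if "y \<in> {0<..<B} - {}" for y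
        using has_real_derivative_ibp_boundary[OF assms(2), of y b] that
        by (simp add: has_real_derivative_iff_has_vector_derivative)
    qed (use that in auto)
    moreover have "((\<lambda>y. K_integrand b c y - ibp_term1 b c y - (2 * b - 1) * ibp_term2 b c y)
        has_integral integral {0..B} (K_integrand b c) - integral {0..B} (ibp_term1 b c)
          - (2 * b - 1) * integral {0..B} (ibp_term2 b c)) {0..B}"
      using assms by (intro has_integral_diff has_integral_mult_right integrable_integral
        integrable_on_atLeastAtMost_if_absolutely_integrable integrable)
    ultimately have "ibp_boundary b c B - ibp_boundary b c 0 = integral {0..B} (K_integrand b c)
        - integral {0..B} (ibp_term1 b c) - (2 * b - 1) * integral {0..B} (ibp_term2 b c)"
      by (rule has_integral_unique)
    then show ?thesis
      by (simp add: ibp_boundary_def)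
  qed
  have "((\<lambda>B. ibp_boundary b c B + integral {0..B} (ibp_term1 b c)
            + (2 * b - 1) * integral {0..B} (ibp_term2 b c))
        \<longlongrightarrow> 0 + integral {0..} (ibp_term1 b c) + (2 * b - 1) * integral {0..} (ibp_term2 b c)) at_top"
  proof (intro tendsto_intros tendsto_integral_atLeastAtMost integrable assms)
    show "(ibp_boundary b c \<longlongrightarrow> 0) at_top"
      unfolding ibp_boundary_def using assms by real_asymp
  qed
  moreover have "\<forall>\<^sub>F B in at_top. ibp_boundary b c B + integral {0..B} (ibp_term1 b c)
      + (2 * b - 1) * integral {0..B} (ibp_term2 b c) = integral {0..B} (K_integrand b c)"
    using partial by (intro eventually_at_top_linorderI[of 0]) simp
  ultimately have "((\<lambda>B. integral {0..B} (K_integrand b c))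
        \<longlongrightarrow> integral {0..} (ibp_term1 b c) + (2 * b - 1) * integral {0..} (ibp_term2 b c)) at_top"
    by (simp add: tendsto_cong)
  moreover have "((\<lambda>B. integral {0..B} (K_integrand b c)) \<longlongrightarrow> K b c) at_top"
    unfolding K_def by (intro tendsto_integral_atLeastAtMost K_integrand_absolutely_integrable assms)
  ultimately show ?thesis
    using tendsto_unique[OF trivial_limit_at_top_linorder] by blast
qed

lemma exp_neg_two_powr_ge:
  fixes b y :: real
  assumes "b > 0" "0 \<le> y" "y \<le> 1"
  shows "exp (-2) \<le> exp (-2 * y powr b)"
  using assms powr_mono2[of b y 1] by simp

lemma integral_ibp_term1_ge:
  assumes "b > 0" "c > 0"
  shows "exp (-2) * (- ln c - 1) \<le> integral {0..} (ibp_term1 b c)"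
proof -
  have "((\<lambda>y. y / (c + y)^2) has_integral (ln (c + 1) + c / (c + 1)) - (ln (c + 0) + c / (c + 0))) {0..1}"
  proof (rule fundamental_theorem_of_calculus)
    show "((\<lambda>y. ln (c + y) + c / (c + y)) has_vector_derivative y / (c + y)^2) (at y within {0..1})"
      if "y \<in> {0..1}" for y
    proof -
      have "c + y > 0" using that assms by simp
      then show ?thesis
        unfolding has_real_derivative_iff_has_vector_derivative [symmetric]
        by (auto intro!: derivative_eq_intros) (simp add: power2_eq_square diff_divide_eq_iff divide_diff_eq_iff)
    qed
  qed simp
  then have "((\<lambda>y. y / (c + y)^2) has_integral ln (c + 1) + c / (c + 1) - ln c - 1) {0..1}"
    using assms by (simp add: algebra_simps)
  then have "exp (-2) * (ln (c + 1) + c / (c + 1) - ln c - 1) \<le> integral {0..1} (ibp_term1 b c)"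
  proof (rule has_integral_le[OF has_integral_mult_right integrable_integral])
    show "ibp_term1 b c integrable_on {0..1}"
      using ibp_term1_absolutely_integrable[OF assms]
      by (rule integrable_on_atLeastAtMost_if_absolutely_integrable)
    show "exp (-2) * (y / (c + y)^2) \<le> ibp_term1 b c y" if "y \<in> {0..1}" for y
    proof -
      have "exp (-2) * y \<le> y * exp (-2 * y powr b)"
        using exp_neg_two_powr_ge[OF assms(1), of y] that by (simp add: mult.commute mult_left_mono)
      then show ?thesis
        unfolding ibp_term1_def by (simp add: divide_right_mono)
    qed
  qed
  also have "\<dots> \<le> integral {0..} (ibp_term1 b c)"
    using assms ibp_term1_nonneg
    by (intro integral_atLeastAtMost_le_atLeast ibp_term1_absolutely_integrable)
  finally show ?thesis
    using assms by (smt (verit) exp_gt_zero ln_ge_zero mult_left_mono divide_nonneg_nonneg)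
qed

lemma integral_ibp_term2_nonneg:
  assumes "b > 0" "c > 0"
  shows "integral {0..} (ibp_term2 b c) \<ge> 0"
  using ibp_term2_absolutely_integrable[OF assms] ibp_term2_nonneg[OF assms(2)]
  by (intro integral_nonneg) (auto simp: absolutely_integrable_on_def)

lemma integral_ibp_term2_le:
  assumes "b > 0" "c > 0"
  shows "integral {0..} (ibp_term2 b c) \<le> 1 / (2 * b)"
proof (rule tendsto_upperbound)
  show "((\<lambda>B. integral {0..B} (ibp_term2 b c)) \<longlongrightarrow> integral {0..} (ibp_term2 b c)) at_top"
    by (intro tendsto_integral_atLeastAtMost ibp_term2_absolutely_integrable assms)
  show "\<forall>\<^sub>F B in at_top. integral {0..B} (ibp_term2 b c) \<le> 1 / (2 * b)"
  proof (rule eventually_at_top_linorderI[of 0])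
    fix B :: real
    assume "B \<ge> 0"
    have "((\<lambda>y. y powr (b - 1) * exp (-2 * y powr b)) has_integral
        (- exp (-2 * B powr b) / (2 * b)) - (- exp (-2 * 0 powr b) / (2 * b))) {0..B}"
    proof (rule fundamental_theorem_of_calculus_interior_strong[where S = "{}"])
      have "continuous_on {0..} (\<lambda>y. - exp (-2 * y powr b) / (2 * b))"
        using assms by (intro continuous_intros continuous_on_powr_atLeast_0) auto
      then show "continuous_on {0..B} (\<lambda>y. - exp (-2 * y powr b) / (2 * b))"
        by (rule continuous_on_subset) auto
      show "((\<lambda>y. - exp (-2 * y powr b) / (2 * b)) has_vector_derivative
          y powr (b - 1) * exp (-2 * y powr b)) (at y)" if "y \<in> {0<..<B} - {}" for y
      proof -
        have "y powr (b - 1) = y powr b / y" using that by (simp add: powr_diff)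
        with that assms show ?thesis
          unfolding has_real_derivative_iff_has_vector_derivative [symmetric]
          by (auto intro!: derivative_eq_intros simp: field_simps)
      qed
    qed (use \<open>B \<ge> 0\<close> in auto)
    then have int: "((\<lambda>y. y powr (b - 1) * exp (-2 * y powr b)) has_integral
        (1 - exp (-2 * B powr b)) / (2 * b)) {0..B}"
      using assms by (simp add: diff_divide_distrib)
    have "integral {0..B} (ibp_term2 b c) \<le> (1 - exp (-2 * B powr b)) / (2 * b)"
    proof (rule has_integral_le[OF integrable_integral int])
      show "ibp_term2 b c integrable_on {0..B}"
        using ibp_term2_absolutely_integrable[OF assms]
        by (rule integrable_on_atLeastAtMost_if_absolutely_integrable)
      show "ibp_term2 b c y \<le> y powr (b - 1) * exp (-2 * y powr b)" if "y \<in> {0..B}" for y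
      proof (cases "y = 0")
        case False
        with that have "y > 0" by simp
        then have "y powr b / (c + y) \<le> y powr b / y"
          using assms by (intro divide_left_mono) auto
        also have "\<dots> = y powr (b - 1)"
          using \<open>y > 0\<close> by (simp add: powr_diff)
        finally have "y powr b / (c + y) * exp (-2 * y powr b) \<le> y powr (b - 1) * exp (-2 * y powr b)"
          by (rule mult_right_mono) simp
        then show ?thesis
          unfolding ibp_term2_def by simp
      qed (simp add: ibp_term2_def)
    qed
    also have "\<dots> \<le> 1 / (2 * b)"
      using assms by (intro divide_right_mono) auto
    finally show "integral {0..B} (ibp_term2 b c) \<le> 1 / (2 * b)" .
  qed
qed simp

lemma integral_ibp_term2_ge:
  assumes "b > 0" "c \<ge> 1"
  shows "exp (-2) / (2 * (b + 1)) \<le> c * integral {0..} (ibp_term2 b c)"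
proof -
  have "c > 0" using assms by simp
  have "((\<lambda>y. y powr b) has_integral 1 / (b + 1)) {0..1}"
    using has_integral_powr_from_0[of b 1] assms by simp
  then have "exp (-2) / (2 * c) * (1 / (b + 1)) \<le> integral {0..1} (ibp_term2 b c)"
  proof (rule has_integral_le[OF has_integral_mult_right integrable_integral])
    show "ibp_term2 b c integrable_on {0..1}"
      using ibp_term2_absolutely_integrable[OF assms(1) \<open>c > 0\<close>]
      by (rule integrable_on_atLeastAtMost_if_absolutely_integrable)
    show "exp (-2) / (2 * c) * y powr b \<le> ibp_term2 b c y" if "y \<in> {0..1}" for y
    proof -
      have "exp (-2) / (2 * c) \<le> exp (-2 * y powr b) / (c + y)"
        using exp_neg_two_powr_ge[OF assms(1), of y] that assms by (intro frac_le) auto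
      then have "y powr b * (exp (-2) / (2 * c)) \<le> y powr b * (exp (-2 * y powr b) / (c + y))"
        by (rule mult_left_mono) simp
      then show ?thesis
        unfolding ibp_term2_def by (simp add: mult.commute)
    qed
  qed
  also have "\<dots> \<le> integral {0..} (ibp_term2 b c)"
    using assms \<open>c > 0\<close> ibp_term2_nonneg
    by (intro integral_atLeastAtMost_le_atLeast ibp_term2_absolutely_integrable)
  finally have "c * (exp (-2) / (2 * c) * (1 / (b + 1))) \<le> c * integral {0..} (ibp_term2 b c)"
    using \<open>c > 0\<close> by (intro mult_left_mono) auto
  then show ?thesis
    using \<open>c > 0\<close> by simp
qed

lemma integral_ibp_term1_le:
  assumes "b > 0"
  shows "\<exists>M. \<forall>c>0. c * integral {0..} (ibp_term1 b c) \<le> M / c"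
proof -
  obtain M where M: "M > 0" "\<forall>c y. c > 0 \<longrightarrow> y \<ge> 0 \<longrightarrow> ibp_term1 b c y \<le> (M / c^2) / (1 + y)^2"
    using ibp_term1_dominated[OF assms] by blast
  have "c * integral {0..} (ibp_term1 b c) \<le> M / c" if "c > 0" for c
  proof -
    have "integral {0..} (ibp_term1 b c) \<le> (M / c^2) * 1"
    proof (rule has_integral_le[OF integrable_integral
          has_integral_mult_right[OF has_integral_inverse_square_shifted]])
      show "ibp_term1 b c integrable_on {0..}"
        using ibp_term1_absolutely_integrable[OF assms that] by (simp add: absolutely_integrable_on_def)
      show "ibp_term1 b c y \<le> M / c^2 * (1 / (1 + y)^2)" if "y \<in> {0..}" for y
        using M \<open>c > 0\<close> that by simp
    qed
    then show ?thesis
      using that by (simp add: field_simps power2_eq_square)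
  qed
  then show ?thesis by blast
qed

lemma K_pos:
  assumes "b \<ge> 1/2" "c > 0"
  shows "K b c > 0"
proof -
  have "b > 0" using assms by simp
  have "integral {0..} (ibp_term1 b c) > 0"
  proof (rule integral_atLeast_pos[of 0 _ 1])
    show "ibp_term1 b c integrable_on {0..}"
      using ibp_term1_absolutely_integrable[OF \<open>b > 0\<close> assms(2)]
      by (simp add: absolutely_integrable_on_def)
    show "continuous_on {0..} (ibp_term1 b c)"
      using \<open>b > 0\<close> assms(2) by (rule continuous_on_ibp_term1)
  qed (use assms in \<open>auto intro: ibp_term1_nonneg simp: ibp_term1_def\<close>)
  moreover have "integral {0..} (ibp_term2 b c) \<ge> 0"
    using \<open>b > 0\<close> assms(2) by (rule integral_ibp_term2_nonneg)
  ultimately show ?thesis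
    using K_eq_ibp[OF \<open>b > 0\<close> assms(2)] assms(1) by (simp add: add_pos_nonneg)
qed

lemma K_pos_somewhere:
  assumes "b > 0"
  shows "\<exists>c>0. K b c > 0"
proof -
  define c where "c = exp (- (exp 2 * (1 / (2 * b) + 1) + 1))"
  have "c > 0" by (simp add: c_def)
  have "exp (-2) * (- ln c - 1) = 1 / (2 * b) + 1"
    by (simp add: c_def exp_minus field_simps)
  then have "1 / (2 * b) + 1 \<le> integral {0..} (ibp_term1 b c)"
    using integral_ibp_term1_ge[OF assms \<open>c > 0\<close>] by simp
  moreover have "integral {0..} (ibp_term2 b c) \<le> 1 / (2 * b)"
    by (rule integral_ibp_term2_le[OF assms \<open>c > 0\<close>])
  moreover have "(2 * b - 1) * integral {0..} (ibp_term2 b c) \<ge> - integral {0..} (ibp_term2 b c)"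
    using integral_ibp_term2_nonneg[OF assms \<open>c > 0\<close>] assms
      mult_nonneg_nonneg[of b "integral {0..} (ibp_term2 b c)"]
    by (simp add: algebra_simps)
  ultimately have "K b c \<ge> 1"
    using K_eq_ibp[OF assms \<open>c > 0\<close>] by linarith
  with \<open>c > 0\<close> show ?thesis by auto
qed

lemma K_neg_eventually:
  assumes "b > 0" "b < 1/2"
  shows "\<forall>\<^sub>F c in at_top. K b c < 0"
proof -
  obtain M where M: "\<forall>c>0. c * integral {0..} (ibp_term1 b c) \<le> M / c"
    using integral_ibp_term1_le[OF assms(1)] by blast
  define d where "d = (1 - 2 * b) * (exp (-2) / (2 * (b + 1)))"
  have "d > 0" using assms by (simp add: d_def)
  have neg: "K b c < 0" if "c \<ge> 1" "c > M / d" for c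
  proof -
    have "c > 0" using that by simp
    have "(2 * b - 1) * (c * integral {0..} (ibp_term2 b c)) \<le> (2 * b - 1) * (exp (-2) / (2 * (b + 1)))"
      using integral_ibp_term2_ge[OF assms(1) that(1)] assms by (intro mult_left_mono_neg) auto
    moreover have "(2 * b - 1) * (exp (-2) / (2 * (b + 1))) = - d"
      unfolding d_def by (metis minus_diff_eq mult_minus_left)
    moreover have "M / c < d"
      using that \<open>d > 0\<close> by (simp add: divide_less_eq mult.commute)
    moreover have "c * K b c = c * integral {0..} (ibp_term1 b c)
        + (2 * b - 1) * (c * integral {0..} (ibp_term2 b c))"
      by (subst K_eq_ibp[OF assms(1) \<open>c > 0\<close>]) (simp add: algebra_simps)
    ultimately have "c * K b c < 0"
      using M[rule_format, OF \<open>c > 0\<close>] by linarith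
    then show ?thesis
      using \<open>c > 0\<close> by (simp add: mult_less_0_iff)
  qed
  have "\<forall>\<^sub>F c in at_top. c \<ge> 1 \<and> c > M / d"
    by (intro eventually_conj eventually_ge_at_top eventually_gt_at_top)
  then show ?thesis
    by (rule eventually_mono) (use neg in blast)
qed

lemma isCont_K:
  assumes "b > 0" "c > 0"
  shows "isCont (K b) c"
proof (rule continuous_at_sequentiallyI)
  fix u :: "nat \<Rightarrow> real"
  assume u: "u \<longlonglongrightarrow> c"
  obtain M where M: "M > 0" "\<forall>c y. c > 0 \<longrightarrow> y \<ge> 0 \<longrightarrow> \<bar>K_integrand b c y\<bar> \<le> (M / c) / (1 + y)^2"
    using K_integrand_dominated[OF assms(1)] by blast
  \<comment> \<open>Clamping the sequence at \<open>c/2\<close> keeps the dominating function uniform.\<close>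
  define v where "v n = max (u n) (c / 2)" for n
  have v: "v n \<ge> c / 2" for n
    by (simp add: v_def)
  have "v \<longlonglongrightarrow> max c (c / 2)"
    unfolding v_def by (intro tendsto_intros u)
  then have "v \<longlonglongrightarrow> c"
    using assms by simp
  have "(\<lambda>n. integral {0..} (K_integrand b (v n))) \<longlonglongrightarrow> integral {0..} (K_integrand b c)"
  proof (rule dominated_convergence(2))
    show "K_integrand b (v n) integrable_on {0..}" for n
      using K_integrand_absolutely_integrable[OF assms(1), of "v n"] v[of n] assms
      by (simp add: absolutely_integrable_on_def)
    show "(\<lambda>y. (2 * M / c) * (1 / (1 + y)^2)) integrable_on {0..}"
      using has_integral_mult_right[OF has_integral_inverse_square_shifted] by blast
    show "norm (K_integrand b (v n) y) \<le> (2 * M / c) * (1 / (1 + y)^2)" if "y \<in> {0..}" for n y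
    proof -
      have "\<bar>K_integrand b (v n) y\<bar> \<le> (M / v n) / (1 + y)^2"
        using M v[of n] assms that by auto
      also have "\<dots> \<le> (M / (c / 2)) / (1 + y)^2"
        using v[of n] assms M that by (intro divide_right_mono divide_left_mono) auto
      finally show ?thesis by (simp add: mult.commute)
    qed
    show "(\<lambda>n. K_integrand b (v n) y) \<longlonglongrightarrow> K_integrand b c y" if "y \<in> {0..}" for y
      unfolding K_integrand_def using that assms by (intro tendsto_intros \<open>v \<longlonglongrightarrow> c\<close>) auto
  qed
  moreover have "\<forall>\<^sub>F n in sequentially. integral {0..} (K_integrand b (v n)) = K b (u n)"
    using order_tendstoD(1)[OF u, of "c / 2"] assms
    by (auto simp: v_def K_def elim: eventually_mono)
  ultimately show "(\<lambda>n. K b (u n)) \<longlonglongrightarrow> K b c"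
    unfolding K_def[of b c] by (rule Lim_transform_eventually)
qed

lemma K_scaled_strict_decreasing:
  assumes "b > 0" "0 < c1" "c1 < c2"
  shows "(c2 + 1) * K b c2 < (c1 + 1) * K b c1"
proof -
  have "c2 > 0" using assms by simp
  define g where "g y = (c1 + 1) * K_integrand b c1 y - (c2 + 1) * K_integrand b c2 y" for y
  have g_eq: "g y = phi b y * (1 - y) * (c2 - c1) / ((c1 + y) * (c2 + y))" if "y \<ge> 0" for y
    using that assms unfolding g_def K_integrand_def by (simp add: field_simps)
  have g_int: "(g has_integral (c1 + 1) * K b c1 - (c2 + 1) * K b c2) {0..}"
    unfolding g_def using assms \<open>c2 > 0\<close>
    by (intro has_integral_diff has_integral_mult_right has_integral_K_integrand)
  have "integral {0..} g > 0"
  proof (rule integral_atLeast_pos[of 0 g 2])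
    show "continuous_on {0..} g"
      unfolding g_def using assms \<open>c2 > 0\<close> by (intro continuous_intros continuous_on_K_integrand)
    show "g integrable_on {0..}"
      using g_int by blast
    show "g y \<ge> 0" if "y \<ge> 0" for y
      using g_eq[OF that] phi_mult_one_minus_nonneg[OF assms(1) that] that assms by simp
    show "g 2 > 0"
      using g_eq[of 2] phi_two_neg[OF assms(1)] assms by (simp add: mult_neg_pos divide_neg_pos)
  qed simp
  with g_int show ?thesis
    by (simp add: integral_unique)
qed

lemma K_unique_zero:
  assumes "b > 0" "b < 1/2"
  shows "\<exists>!c. c > 0 \<and> K b c = 0"
proof -
  obtain c1 where c1: "c1 > 0" "K b c1 > 0"
    using K_pos_somewhere[OF assms(1)] by blast
  obtain c2 where c2: "c2 \<ge> c1" "K b c2 < 0"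
    using eventually_conj[OF K_neg_eventually[OF assms] eventually_ge_at_top[of c1]]
    by (auto dest: eventually_happens)
  have "continuous_on {c1..c2} (K b)"
    using c1 c2 assms by (intro continuous_at_imp_continuous_on ballI isCont_K) auto
  then obtain c where "c1 \<le> c" "K b c = 0"
    using IVT2'[of "K b" c2 0 c1] c1 c2 by auto
  moreover have "c' = c" if "c' > 0" "K b c' = 0" "c > 0" "K b c = 0" for c c'
    using K_scaled_strict_decreasing[OF assms(1), of c c'] K_scaled_strict_decreasing[OF assms(1), of c' c]
      that by (cases c c' rule: linorder_cases) auto
  ultimately show ?thesis
    using c1 by (intro ex1I[of _ c]) auto
qed

lemma lam_integrand_eq_scaled_K_integrand:
  assumes "\<alpha> > 0" "L > 0" "x \<ge> 0"
  shows "lam_integrand \<alpha> L x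
    = L powr (\<alpha> / 2) * K_integrand (2 / \<alpha>) (L powr (\<alpha> / 2)) (L powr (\<alpha> / 2) * x)"
proof -
  define s where "s = L powr (\<alpha> / 2)"
  have "s > 0" using assms by (simp add: s_def)
  have "(s * x) powr (2 / \<alpha>) = L * x powr (2 / \<alpha>)"
    using assms \<open>s > 0\<close> by (simp add: s_def powr_mult powr_powr)
  moreover have "s + s * x = s * (1 + x)"
    by (simp add: algebra_simps)
  ultimately show ?thesis
    using \<open>s > 0\<close> unfolding lam_integrand_def K_integrand_def phi_def s_def[symmetric]
    by (simp add: mult_ac)
qed

lemma has_integral_lam_integrand:
  assumes "\<alpha> > 0" "L > 0"
  shows "(lam_integrand \<alpha> L has_integral K (2 / \<alpha>) (L powr (\<alpha> / 2))) {0<..}"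
proof -
  define s where "s = L powr (\<alpha> / 2)"
  define b where "b = 2 / \<alpha>"
  have "s > 0" "b > 0"
    using assms by (simp_all add: s_def b_def)
  have image: "(\<lambda>x. s * x) ` {0..} = {0..}"
  proof (intro equalityI subsetI)
    fix y :: real
    assume "y \<in> {0..}"
    with \<open>s > 0\<close> show "y \<in> (\<lambda>x. s * x) ` {0..}"
      by (intro image_eqI[of _ _ "y / s"]) auto
  qed (use \<open>s > 0\<close> in auto)
  have "(\<lambda>x. \<bar>s\<bar> * K_integrand b s (s * x)) absolutely_integrable_on {0..}
      \<and> integral {0..} (\<lambda>x. \<bar>s\<bar> * K_integrand b s (s * x)) = K b s"
    using has_absolute_integral_change_of_variables_1'[of "{0..}" "\<lambda>x. s * x" "\<lambda>_. s"
        "K_integrand b s" "K b s"]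
      K_integrand_absolutely_integrable[OF \<open>b > 0\<close> \<open>s > 0\<close>] \<open>s > 0\<close>
    unfolding image K_def
    by (auto intro!: derivative_eq_intros simp: inj_on_def)
  then have "((\<lambda>x. \<bar>s\<bar> * K_integrand b s (s * x)) has_integral K b s) {0..}"
    by (metis absolutely_integrable_on_def has_integral_integral)
  then have "((\<lambda>x. s * K_integrand b s (s * x)) has_integral K b s) {0..}"
    using \<open>s > 0\<close> by simp
  then have "(lam_integrand \<alpha> L has_integral K b s) {0..}"
    using lam_integrand_eq_scaled_K_integrand[OF assms] unfolding s_def b_def
    by (subst has_integral_cong) auto
  moreover have "negligible {x \<in> {0..} - {0<..}. lam_integrand \<alpha> L x \<noteq> 0}"
    by (rule negligible_subset[of "{0}"]) auto
  moreover have "negligible {x \<in> {0<..} - {0..}. lam_integrand \<alpha> L x \<noteq> 0}"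
    by (rule negligible_subset[of "{}"]) auto
  ultimately show ?thesis
    unfolding s_def b_def using has_integral_spike_set_eq by blast
qed

theorem lemma4:
  fixes \<alpha> :: real
  assumes "\<alpha> > 2"
  shows "(\<alpha> \<le> 4 \<longrightarrow> \<not> (\<exists>\<Lambda>>0. (lam_integrand \<alpha> \<Lambda> has_integral 0) {0<..}))
       \<and> (\<alpha> > 4 \<longrightarrow> (\<exists>!\<Lambda>. \<Lambda> > 0 \<and> (lam_integrand \<alpha> \<Lambda> has_integral 0) {0<..}))"
proof -
  define b where "b = 2 / \<alpha>"
  have "\<alpha> > 0" "b > 0"
    using assms by (simp_all add: b_def)
  have root_iff: "(lam_integrand \<alpha> \<Lambda> has_integral 0) {0<..} \<longleftrightarrow> K b (\<Lambda> powr (\<alpha> / 2)) = 0"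
    if "\<Lambda> > 0" for \<Lambda>
    using has_integral_lam_integrand[OF \<open>\<alpha> > 0\<close> that] has_integral_unique
    unfolding b_def by metis
  have powr_inverse: "(x powr (\<alpha> / 2)) powr b = x" "(x powr b) powr (\<alpha> / 2) = x" if "x > 0" for x
    using that \<open>\<alpha> > 0\<close> by (simp_all add: b_def powr_powr)
  have "\<not> (\<exists>\<Lambda>>0. (lam_integrand \<alpha> \<Lambda> has_integral 0) {0<..})" if "\<alpha> \<le> 4"
  proof -
    have "b \<ge> 1/2"
      using that \<open>\<alpha> > 0\<close> by (simp add: b_def field_simps)
    then have "K b (\<Lambda> powr (\<alpha> / 2)) > 0" if "\<Lambda> > 0" for \<Lambda>
      using that by (intro K_pos) auto
    then show ?thesis
      using root_iff by fastforce
  qed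
  moreover have "\<exists>!\<Lambda>. \<Lambda> > 0 \<and> (lam_integrand \<alpha> \<Lambda> has_integral 0) {0<..}" if "\<alpha> > 4"
  proof -
    have "b < 1/2"
      using that by (simp add: b_def field_simps)
    then obtain c where c: "c > 0" "K b c = 0" and unique: "\<And>c'. c' > 0 \<Longrightarrow> K b c' = 0 \<Longrightarrow> c' = c"
      using K_unique_zero[OF \<open>b > 0\<close>] by metis
    show ?thesis
    proof (rule ex1I[of _ "c powr b"])
      show "c powr b > 0 \<and> (lam_integrand \<alpha> (c powr b) has_integral 0) {0<..}"
        using c root_iff[of "c powr b"] powr_inverse by simp
      show "\<Lambda> = c powr b" if "\<Lambda> > 0 \<and> (lam_integrand \<alpha> \<Lambda> has_integral 0) {0<..}" for \<Lambda>
        using that root_iff unique[of "\<Lambda> powr (\<alpha> / 2)"] powr_inverse(1)[of \<Lambda>] by auto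
    qed
  qed
  ultimately show ?thesis
    by blast
qed

end
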